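(* Let $n,p$ be positive integers, $X\in\mathbb{R}^{n\times p}$, $\mathbf y\in\mathbb{R}^n$, $\delta>0$ and $\lambda>0$. Then \[ \nabla f_\lambda(\mathbf t)=\boldsymbol\zeta_{\mathbf t}+\lambda\mathbf 1,\qquad \mathbf t\in(0,1)^p, \] and, for every $\mathbf w\in\mathbb{R}^p$, with $\mathbf t=\mathbf t(\mathbf w)$, \[ \nabla g_\lambda(\mathbf w)=(\boldsymbol\zeta_{\mathbf t}+\lambda\mathbf 1)\odot\big(2\mathbf w\odot\exp(-\mathbf w\odot\mathbf w)\big), \] where \[ \boldsymbol\zeta_{\mathbf t}=2\big(\widetilde{\boldsymbol\beta}_{\mathbf t}\odot(\mathbf a_{\mathbf t}-\mathbf d_{\mathbf t})\big)-2(\mathbf b_{\mathbf t}\odot\mathbf c_{\mathbf t}), \] with \begin{align*} \mathbf a_{\mathbf t}&=\left(\tfrac{X^\top X}{n}\right)(\mathbf t\odot\widetilde{\boldsymbol\beta}_{\mathbf t})-\tfrac{X^\top\mathbf y}{n},\qquad \mathbf b_{\mathbf t}=\mathbf a_{\mathbf t}-\tfrac{\delta}{n}(\mathbf t\odot\widetilde{\boldsymbol\beta}_{\mathbf t}),\\ \mathbf c_{\mathbf t}&=L_{\mathbf t}^{-1}(\mathbf t\odot\mathbf a_{\mathbf t}),\qquad \mathbf d_{\mathbf t}=\left(\tfrac{X^\top X}{n}-\tfrac{\delta}{n}I\right)(\mathbf t\odot\mathbf c_{\mathbf t}). \end{align*}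
   Context: For $\mathbf t\in[0,1]^p$, $T_{\mathbf t}=\mathrm{Diag}(t_1,\dots,t_p)$, $X_{\mathbf t}=XT_{\mathbf t}$, $L_{\mathbf t}=\frac1n[X_{\mathbf t}^\top X_{\mathbf t}+\delta(I-T_{\mathbf t}^2)]$ with $I$ the $p\times p$ identity, $\widetilde{\boldsymbol\beta}_{\mathbf t}:=L_{\mathbf t}^{+}\left(X_{\mathbf t}^\top\mathbf y/n\right)$ with $L_{\mathbf t}^+$ the Moore–Penrose pseudo-inverse, $f_\lambda(\mathbf t)=\frac1n\|\mathbf y-X_{\mathbf t}\widetilde{\boldsymbol\beta}_{\mathbf t}\|_2^2+\lambda\sum_{j=1}^p t_j$, $\mathbf t(\mathbf w)$ is defined by $t_j(w_j)=1-\exp(-w_j^2)$, and $g_\lambda(\mathbf w)=f_\lambda(\mathbf t(\mathbf w))$. Here $\odot$ is the element-wise product, $\exp$ is applied element-wise, and $\mathbf 1$ is the all-ones vector in $\mathbb{R}^p$. *)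

theory Defs
  imports "HOL-Analysis.Analysis"
begin

text \<open>Vectors in R^p are real^'p, the data matrix X in R^(n x p) is real^'p^'n,
  so n = CARD('n) and p = CARD('p).\<close>

definition had :: "real^'p \<Rightarrow> real^'p \<Rightarrow> real^'p" where
  "had x z = (\<chi> i. x$i * z$i)"

definition pinv :: "real^'p^'p \<Rightarrow> real^'p^'p" where
  "pinv A = (THE B. A ** B ** A = A \<and> B ** A ** B = B \<and>
                    transpose (A ** B) = A ** B \<and> transpose (B ** A) = B ** A)"

definition Tm :: "real^'p \<Rightarrow> real^'p^'p" where
  "Tm t = (\<chi> i j. if i = j then t$i else 0)"

definition Xt :: "real^'p^'n \<Rightarrow> real^'p \<Rightarrow> real^'p^'n" where
  "Xt X t = X ** Tm t"

definition Lt :: "real^'p^'n \<Rightarrow> real \<Rightarrow> real^'p \<Rightarrow> real^'p^'p" where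
  "Lt X \<delta> t = (1 / real CARD('n)) *\<^sub>R
     (transpose (Xt X t) ** Xt X t + \<delta> *\<^sub>R (mat 1 - Tm t ** Tm t))"

definition betat :: "real^'p^'n \<Rightarrow> real^'n \<Rightarrow> real \<Rightarrow> real^'p \<Rightarrow> real^'p" where
  "betat X y \<delta> t = pinv (Lt X \<delta> t) *v ((1 / real CARD('n)) *\<^sub>R (transpose (Xt X t) *v y))"

definition flam :: "real^'p^'n \<Rightarrow> real^'n \<Rightarrow> real \<Rightarrow> real \<Rightarrow> real^'p \<Rightarrow> real" where
  "flam X y \<delta> lam t = (1 / real CARD('n)) * (norm (y - Xt X t *v betat X y \<delta> t))\<^sup>2
     + lam * (\<Sum>j\<in>UNIV. t$j)"

definition tw :: "real^'p \<Rightarrow> real^'p" where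
  "tw w = (\<chi> j. 1 - exp (- (w$j)\<^sup>2))"

definition glam :: "real^'p^'n \<Rightarrow> real^'n \<Rightarrow> real \<Rightarrow> real \<Rightarrow> real^'p \<Rightarrow> real" where
  "glam X y \<delta> lam w = flam X y \<delta> lam (tw w)"

definition avec :: "real^'p^'n \<Rightarrow> real^'n \<Rightarrow> real \<Rightarrow> real^'p \<Rightarrow> real^'p" where
  "avec X y \<delta> t = ((1 / real CARD('n)) *\<^sub>R (transpose X ** X)) *v had t (betat X y \<delta> t)
      - (1 / real CARD('n)) *\<^sub>R (transpose X *v y)"

definition bvec :: "real^'p^'n \<Rightarrow> real^'n \<Rightarrow> real \<Rightarrow> real^'p \<Rightarrow> real^'p" where
  "bvec X y \<delta> t = avec X y \<delta> t - (\<delta> / real CARD('n)) *\<^sub>R had t (betat X y \<delta> t)"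

definition cvec :: "real^'p^'n \<Rightarrow> real^'n \<Rightarrow> real \<Rightarrow> real^'p \<Rightarrow> real^'p" where
  "cvec X y \<delta> t = matrix_inv (Lt X \<delta> t) *v had t (avec X y \<delta> t)"

definition dvec :: "real^'p^'n \<Rightarrow> real^'n \<Rightarrow> real \<Rightarrow> real^'p \<Rightarrow> real^'p" where
  "dvec X y \<delta> t = ((1 / real CARD('n)) *\<^sub>R (transpose X ** X) - (\<delta> / real CARD('n)) *\<^sub>R mat 1)
      *v had t (cvec X y \<delta> t)"

definition zeta :: "real^'p^'n \<Rightarrow> real^'n \<Rightarrow> real \<Rightarrow> real^'p \<Rightarrow> real^'p" where
  "zeta X y \<delta> t = 2 *\<^sub>R had (betat X y \<delta> t) (avec X y \<delta> t - dvec X y \<delta> t)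
      - 2 *\<^sub>R had (bvec X y \<delta> t) (cvec X y \<delta> t)"

end

theory Submission
  imports Defs
begin

text \<open>Where all |t_j| < 1, the quadratic form of L_t dominates (\<delta>/n) min_j (1 - t_j^2) |v|^2.
  Hence near t the matrices L_s are invertible with a uniform bound on their inverses, the
  pseudo-inverse is the inverse, and \<beta>~_s solves L_s \<beta>~_s = X_s^T y / n. Differentiating this
  identity gives \<beta>~' h = L_t^-1 q_t(h), where q_t is the derivative of s \<mapsto> X_s^T y/n - L_s \<beta>~_t;
  the uniform bound replaces any continuity argument for s \<mapsto> L_s^-1. The chain rule for the
  squared residual, with the symmetry of L_t and of X^T X, rearranges the derivative of f into
  (\<zeta>_t + \<lambda>1) \<bullet> h. The formula for g is the chain rule, since t(w) lies in [0,1)^p.\<close>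

subsection \<open>Hadamard products and diagonal matrices\<close>

lemma Tm_mult_vec: "Tm s *v v = had s v"
proof -
  have "(\<Sum>j\<in>UNIV. (if i = j then s$i else 0) * v$j) = s$i * v$i" for i
    by (simp add: if_distrib[of "\<lambda>x. x * _"] cong: if_cong)
  then show ?thesis by (simp add: Tm_def had_def matrix_vector_mult_def vec_eq_iff)
qed

lemma transpose_Tm: "transpose (Tm s) = Tm s"
  by (simp add: Tm_def transpose_def vec_eq_iff)

lemma Xt_mult_vec: "Xt X s *v v = X *v had s v"
  by (simp add: Xt_def matrix_vector_mul_assoc[symmetric] Tm_mult_vec)

lemma transpose_Xt_mult_vec: "transpose (Xt X s) *v z = had s (transpose X *v z)"
  by (simp add: Xt_def matrix_transpose_mul transpose_Tm matrix_vector_mul_assoc[symmetric]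
      Tm_mult_vec del: transpose_matrix_vector)

lemma had_commute: "had x y = had y x"
  by (simp add: had_def vec_eq_iff mult.commute)

lemma inner_had_right: "x \<bullet> had s z = had s x \<bullet> z"
  by (simp add: inner_vec_def had_def mult_ac)

lemma bounded_bilinear_had: "bounded_bilinear had"
proof -
  have "bilinear had"
    unfolding bilinear_def by (auto intro!: linearI simp: had_def vec_eq_iff algebra_simps)
  then show ?thesis by (simp add: bilinear_conv_bounded_bilinear)
qed

lemma bounded_linear_Tm: "bounded_linear Tm"
proof -
  have "linear Tm" by (auto intro!: linearI simp: Tm_def vec_eq_iff)
  then show ?thesis by (simp add: linear_conv_bounded_linear)
qed

lemma bounded_bilinear_matrix_vector_mult:
  "bounded_bilinear ((*v) :: real^'m^'n \<Rightarrow> real^'m \<Rightarrow> real^'n)"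
proof -
  have "bilinear ((*v) :: real^'m^'n \<Rightarrow> real^'m \<Rightarrow> real^'n)"
    unfolding bilinear_def
    by (auto intro!: linearI simp: matrix_vector_mult_add_rdistrib matrix_vector_right_distrib
        matrix_vector_mult_scaleR scaleR_matrix_vector_assoc)
  then show ?thesis by (simp add: bilinear_conv_bounded_bilinear)
qed

lemma bounded_bilinear_matrix_matrix_mult:
  "bounded_bilinear ((**) :: real^'m^'n \<Rightarrow> real^'k^'m \<Rightarrow> real^'k^'n)"
proof -
  have "bilinear ((**) :: real^'m^'n \<Rightarrow> real^'k^'m \<Rightarrow> real^'k^'n)"
    unfolding bilinear_def
    by (auto intro!: linearI simp: matrix_matrix_mult_def vec_eq_iff sum.distrib algebra_simps
        scaleR_sum_right sum_distrib_left)
  then show ?thesis by (simp add: bilinear_conv_bounded_bilinear)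
qed

lemma inner_Gram_mult_vec: "u \<bullet> ((transpose X ** X) *v v) = (X *v u) \<bullet> (X *v v)"
  for X :: "real^'m^'n"
  by (metis dot_lmul_matrix inner_commute matrix_vector_mul_assoc transpose_matrix_vector)

lemma
  fixes A :: "'a::semiring_1^'n^'m"
  assumes "invertible A"
  shows matrix_inv_right: "A ** matrix_inv A = mat 1"
    and matrix_inv_left: "matrix_inv A ** A = mat 1"
proof -
  have "\<exists>A'. A ** A' = mat 1 \<and> A' ** A = mat 1" using assms by (simp add: invertible_def)
  then have "A ** matrix_inv A = mat 1 \<and> matrix_inv A ** A = mat 1"
    unfolding matrix_inv_def by (rule someI_ex)
  then show "A ** matrix_inv A = mat 1" "matrix_inv A ** A = mat 1" by auto
qed

lemma pinv_eq_matrix_inv: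
  assumes "invertible A"
  shows "pinv A = matrix_inv A"
  unfolding pinv_def
proof (rule the_equality)
  note inv = matrix_inv_right[OF assms] matrix_inv_left[OF assms]
  show "A ** matrix_inv A ** A = A \<and> matrix_inv A ** A ** matrix_inv A = matrix_inv A \<and>
    transpose (A ** matrix_inv A) = A ** matrix_inv A \<and>
    transpose (matrix_inv A ** A) = matrix_inv A ** A"
    by (simp add: inv)
  fix B
  assume "A ** B ** A = A \<and> B ** A ** B = B \<and> transpose (A ** B) = A ** B \<and>
    transpose (B ** A) = B ** A"
  then have "A ** B ** A = A" by blast
  have "B = matrix_inv A ** (A ** B ** A) ** matrix_inv A"
    by (simp add: matrix_mul_assoc[symmetric] inv) (simp add: matrix_mul_assoc inv)
  then show "B = matrix_inv A" by (simp add: \<open>A ** B ** A = A\<close> matrix_mul_assoc inv)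
qed

lemma inner_matrix_inv_self_adjoint:
  fixes A :: "real^'n^'n"
  assumes "invertible A" and "\<And>u v. u \<bullet> (A *v v) = (A *v u) \<bullet> v"
  shows "u \<bullet> (matrix_inv A *v v) = (matrix_inv A *v u) \<bullet> v"
proof -
  have AA': "A *v (matrix_inv A *v x) = x" for x
    by (simp add: matrix_vector_mul_assoc matrix_inv_right[OF assms(1)])
  have "u \<bullet> (matrix_inv A *v v) = (A *v (matrix_inv A *v u)) \<bullet> (matrix_inv A *v v)"
    by (simp add: AA')
  also have "\<dots> = (matrix_inv A *v u) \<bullet> v"
    using assms(2)[of "matrix_inv A *v u" "matrix_inv A *v v"] by (simp add: AA')
  finally show ?thesis .
qed

lemma norm_lower_bound_if_coercive:
  fixes f :: "'a::real_inner \<Rightarrow> 'a"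
  assumes "c * (norm v)\<^sup>2 \<le> v \<bullet> f v"
  shows "c * norm v \<le> norm (f v)"
proof (cases "v = 0")
  case False
  have "norm v * (c * norm v) \<le> norm v * norm (f v)"
    using assms norm_cauchy_schwarz[of v "f v"] by (simp add: power2_eq_square mult_ac)
  with False show ?thesis by simp
qed simp

lemma invertible_if_norm_lower_bound:
  fixes A :: "real^'n^'n"
  assumes "\<kappa> > 0" and "\<And>v. \<kappa> * norm v \<le> norm (A *v v)"
  shows "invertible A"
proof -
  have "inj ((*v) A)"
  proof (rule injI)
    fix u v assume "A *v u = A *v v"
    then have "\<kappa> * norm (u - v) \<le> 0"
      using assms(2)[of "u - v"] by (simp add: matrix_vector_mult_diff_distrib)
    with \<open>\<kappa> > 0\<close> show "u = v" by (simp add: mult_le_0_iff)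
  qed
  then show ?thesis
    using invertible_left_inverse matrix_left_invertible_injective by blast
qed

subsection \<open>Implicit differentiation of a linear system\<close>

lemma has_derivative_if_dominated:
  fixes \<beta> :: "'a::real_normed_vector \<Rightarrow> 'b::real_normed_vector"
    and \<psi> :: "'a \<Rightarrow> 'c::real_normed_vector"
  assumes "(\<psi> has_derivative q) (at t)" and "bounded_linear B" and "\<kappa> > 0"
    and "\<forall>\<^sub>F s in at t. \<kappa> * norm (\<beta> s - \<beta> t - B (s - t)) \<le> norm (\<psi> s - \<psi> t - q (s - t))"
  shows "(\<beta> has_derivative B) (at t)"
proof -
  have "((\<lambda>s. norm (\<psi> s - \<psi> t - q (s - t)) / norm (s - t)) \<longlongrightarrow> 0) (at t)"
    using assms(1) by (simp add: has_derivative_iff_norm)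
  then have "((\<lambda>s. norm (\<beta> s - \<beta> t - B (s - t)) / norm (s - t)) \<longlongrightarrow> 0) (at t)"
  proof (rule tendsto_0_le[where K = "1 / \<kappa>"])
    show "\<forall>\<^sub>F s in at t. norm (norm (\<beta> s - \<beta> t - B (s - t)) / norm (s - t))
        \<le> norm (norm (\<psi> s - \<psi> t - q (s - t)) / norm (s - t)) * (1 / \<kappa>)"
      using assms(4)
    proof (rule eventually_mono)
      fix s
      assume "\<kappa> * norm (\<beta> s - \<beta> t - B (s - t)) \<le> norm (\<psi> s - \<psi> t - q (s - t))"
      with \<open>\<kappa> > 0\<close> have "norm (\<beta> s - \<beta> t - B (s - t)) \<le> norm (\<psi> s - \<psi> t - q (s - t)) * (1 / \<kappa>)"
        by (simp add: field_simps)
      then have "norm (\<beta> s - \<beta> t - B (s - t)) / norm (s - t)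
          \<le> norm (\<psi> s - \<psi> t - q (s - t)) * (1 / \<kappa>) / norm (s - t)"
        by (rule divide_right_mono) simp
      then show "norm (norm (\<beta> s - \<beta> t - B (s - t)) / norm (s - t))
          \<le> norm (norm (\<psi> s - \<psi> t - q (s - t)) / norm (s - t)) * (1 / \<kappa>)"
        by (simp add: ac_simps)
    qed
  qed
  with assms(2) show ?thesis by (simp add: has_derivative_iff_norm)
qed

text \<open>With B = M(t)^-1 q and \<psi> = r - M \<beta>(t) - (M - M(t)) B, the error satisfies
  M(s) (\<beta>(s) - \<beta>(t) - B(s - t)) = \<psi>(s) - \<psi>(t) - q(s - t), and \<psi> still has derivative q because the
  correction term is of second order. The uniform lower bound on M(s) gives the domination.\<close>

lemma has_derivative_solution_of_linear_system:
  fixes M :: "'a::real_normed_vector \<Rightarrow> real^'p^'p" and \<beta> r :: "'a \<Rightarrow> real^'p"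
  assumes "M differentiable (at t)"
    and q: "((\<lambda>s. r s - M s *v \<beta> t) has_derivative q) (at t)"
    and "\<kappa> > 0" and lower: "\<forall>\<^sub>F s in nhds t. \<forall>v. \<kappa> * norm v \<le> norm (M s *v v)"
    and solves: "\<forall>\<^sub>F s in nhds t. M s *v \<beta> s = r s"
  shows "(\<beta> has_derivative (\<lambda>h. matrix_inv (M t) *v q h)) (at t)"
proof -
  obtain M' where M': "(M has_derivative M') (at t)"
    using assms(1) by (auto simp: differentiable_def)
  have inv: "invertible (M t)"
    using invertible_if_norm_lower_bound[OF \<open>\<kappa> > 0\<close>] eventually_nhds_x_imp_x[OF lower] by blast
  define B where "B = (\<lambda>h. matrix_inv (M t) *v q h)"
  have "bounded_linear B"
    unfolding B_def
    by (rule bounded_linear_compose[OF matrix_vector_mul_bounded_linear has_derivative_bounded_linear[OF q]])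
  then have B0: "B 0 = 0" by (rule linear_simps)
  have MB: "M t *v B h = q h" for h
    by (simp add: B_def matrix_vector_mul_assoc matrix_inv_right[OF inv])
  define \<psi> where "\<psi> = (\<lambda>s. r s - M s *v \<beta> t - (M s - M t) *v B (s - t))"
  have "((\<lambda>s. (M s - M t) *v B (s - t)) has_derivative (\<lambda>h. 0)) (at t)"
    using bounded_bilinear.FDERIV[OF bounded_bilinear_matrix_vector_mult
        has_derivative_diff[OF M' has_derivative_const[of "M t"]]
        bounded_linear.has_derivative[OF \<open>bounded_linear B\<close>
          has_derivative_diff[OF has_derivative_ident has_derivative_const[of t]]]]
    by (simp add: B0)
  then have "(\<psi> has_derivative q) (at t)"
    unfolding \<psi>_def using has_derivative_diff[OF q] by fastforce
  moreover have "\<forall>\<^sub>F s in at t. \<kappa> * norm (\<beta> s - \<beta> t - B (s - t)) \<le> norm (\<psi> s - \<psi> t - q (s - t))"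
  proof -
    have solves_t: "M t *v \<beta> t = r t" using eventually_nhds_x_imp_x[OF solves] .
    have "\<forall>\<^sub>F s in nhds t. \<kappa> * norm (\<beta> s - \<beta> t - B (s - t)) \<le> norm (\<psi> s - \<psi> t - q (s - t))"
      using solves lower
    proof eventually_elim
      case (elim s)
      have "M s *v (\<beta> s - \<beta> t - B (s - t)) = \<psi> s - \<psi> t - q (s - t)"
        by (simp add: \<psi>_def B0 solves_t elim(1) matrix_vector_mult_diff_distrib
            matrix_vector_mult_diff_rdistrib MB[symmetric])
      then show ?case using elim(2) by metis
    qed
    then show ?thesis
      unfolding eventually_at_filter by (rule eventually_mono) simp
  qed
  ultimately show ?thesis
    unfolding B_def[symmetric] by (rule has_derivative_if_dominated[OF _ \<open>bounded_linear B\<close> \<open>\<kappa> > 0\<close>])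
qed

subsection \<open>The matrix L_t\<close>

lemma Lt_mult_vec:
  "Lt X \<delta> s *v v = (1 / real CARD('n)) *\<^sub>R
     (had s ((transpose X ** X) *v had s v) + \<delta> *\<^sub>R (v - had s (had s v)))"
  for X :: "real^'p^'n"
  by (simp add: Lt_def scaleR_matrix_vector_assoc[symmetric] matrix_vector_mult_add_rdistrib
      matrix_vector_mult_diff_rdistrib matrix_vector_mul_assoc[symmetric] Xt_mult_vec
      transpose_Xt_mult_vec Tm_mult_vec del: transpose_matrix_vector)

lemma inner_Lt_mult_vec_commute: "u \<bullet> (Lt X \<delta> s *v v) = (Lt X \<delta> s *v u) \<bullet> v"
  for X :: "real^'p^'n"
proof -
  have "u \<bullet> had s ((transpose X ** X) *v had s v) = had s ((transpose X ** X) *v had s u) \<bullet> v"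
    by (metis inner_commute inner_had_right inner_Gram_mult_vec)
  moreover have "u \<bullet> had s (had s v) = had s (had s u) \<bullet> v"
    by (metis inner_commute inner_had_right)
  ultimately show ?thesis
    by (simp add: Lt_mult_vec inner_add_right inner_add_left inner_diff_right inner_diff_left
        inner_commute[of u v])
qed

lemma inner_Lt_mult_vec_self:
  "v \<bullet> (Lt X \<delta> s *v v) = (1 / real CARD('n)) *
     ((norm (X *v had s v))\<^sup>2 + \<delta> * (\<Sum>j\<in>UNIV. (1 - (s$j)\<^sup>2) * (v$j)\<^sup>2))"
  for X :: "real^'p^'n"
proof -
  have "v \<bullet> had s ((transpose X ** X) *v had s v) = (norm (X *v had s v))\<^sup>2"
    by (simp add: inner_had_right inner_Gram_mult_vec power2_norm_eq_inner del: transpose_matrix_vector)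
  moreover have "v \<bullet> (v - had s (had s v)) = (\<Sum>j\<in>UNIV. (1 - (s$j)\<^sup>2) * (v$j)\<^sup>2)"
    by (simp add: inner_vec_def had_def power2_eq_square algebra_simps sum_subtractf)
  ultimately show ?thesis by (simp add: Lt_mult_vec inner_add_right)
qed

lemma Lt_coercive:
  fixes X :: "real^'p^'n"
  assumes "\<delta> \<ge> 0" and "\<And>j. \<mu> \<le> 1 - (s$j)\<^sup>2"
  shows "\<delta> * \<mu> / real CARD('n) * (norm v)\<^sup>2 \<le> v \<bullet> (Lt X \<delta> s *v v)"
proof -
  have "\<mu> * (norm v)\<^sup>2 = (\<Sum>j\<in>UNIV. \<mu> * (v$j)\<^sup>2)"
    unfolding power2_norm_eq_inner by (simp add: inner_vec_def power2_eq_square sum_distrib_left)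
  also have "\<dots> \<le> (\<Sum>j\<in>UNIV. (1 - (s$j)\<^sup>2) * (v$j)\<^sup>2)"
    by (intro sum_mono mult_right_mono) (simp_all add: assms(2))
  finally have "\<delta> * (\<mu> * (norm v)\<^sup>2) \<le> (norm (X *v had s v))\<^sup>2 + \<delta> * (\<Sum>j\<in>UNIV. (1 - (s$j)\<^sup>2) * (v$j)\<^sup>2)"
    using mult_left_mono[OF _ assms(1)] by (smt (verit) zero_le_power2)
  then show ?thesis
    by (simp add: inner_Lt_mult_vec_self divide_right_mono)
qed

lemma Lt_uniformly_bounded_below_near:
  fixes X :: "real^'p^'n"
  assumes "\<delta> > 0" and "\<And>j. \<bar>t$j\<bar> < 1"
  obtains \<kappa> where "\<kappa> > 0" and "\<forall>\<^sub>F s in nhds t. \<forall>v. \<kappa> * norm v \<le> norm (Lt X \<delta> s *v v)"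
proof -
  define m where "m = Min (range (\<lambda>j. 1 - (t$j)\<^sup>2))"
  define \<mu> where "\<mu> = m / 2"
  have "m > 0" using assms(2) by (simp add: m_def abs_square_less_1)
  then have "\<mu> > 0" by (simp add: \<mu>_def)
  have "\<forall>\<^sub>F s in nhds t. \<forall>j. \<mu> \<le> 1 - (s$j)\<^sup>2"
  proof (rule eventually_all_finite)
    fix j
    have "m \<le> 1 - (t$j)\<^sup>2" by (simp add: m_def)
    with \<open>m > 0\<close> have "\<mu> < 1 - (t$j)\<^sup>2" by (simp add: \<mu>_def)
    moreover have "((\<lambda>s. 1 - (s$j)\<^sup>2) \<longlongrightarrow> 1 - (t$j)\<^sup>2) (nhds t)"
      by (intro tendsto_intros filterlim_ident)
    ultimately have "\<forall>\<^sub>F s in nhds t. \<mu> < 1 - (s$j)\<^sup>2"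
      by (rule order_tendstoD(1)[rotated])
    then show "\<forall>\<^sub>F s in nhds t. \<mu> \<le> 1 - (s$j)\<^sup>2"
      by (rule eventually_mono) simp
  qed
  then have "\<forall>\<^sub>F s in nhds t. \<forall>v. \<delta> * \<mu> / real CARD('n) * norm v \<le> norm (Lt X \<delta> s *v v)"
    by eventually_elim
      (use Lt_coercive[OF less_imp_le[OF \<open>\<delta> > 0\<close>]] norm_lower_bound_if_coercive in blast)
  moreover have "\<delta> * \<mu> / real CARD('n) > 0" using \<open>\<delta> > 0\<close> \<open>\<mu> > 0\<close> by simp
  ultimately show thesis using that by blast
qed

lemma Lt_invertible:
  fixes X :: "real^'p^'n"
  assumes "\<delta> > 0" and "\<And>j. \<bar>t$j\<bar> < 1"
  shows "invertible (Lt X \<delta> t)"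
proof -
  obtain \<kappa> where "\<kappa> > 0" and "\<forall>\<^sub>F s in nhds t. \<forall>v. \<kappa> * norm v \<le> norm (Lt X \<delta> s *v v)"
    using Lt_uniformly_bounded_below_near[OF assms] .
  then show ?thesis
    using invertible_if_norm_lower_bound eventually_nhds_x_imp_x by blast
qed

lemma Lt_differentiable: "Lt X \<delta> differentiable (at t)"
  for X :: "real^'p^'n"
proof -
  have Lt_eq: "Lt X \<delta> = (\<lambda>s. (1 / real CARD('n)) *\<^sub>R
      (Tm s ** (transpose X ** X) ** Tm s + \<delta> *\<^sub>R (mat 1 - Tm s ** Tm s)))"
    by (simp add: fun_eq_iff Lt_def Xt_def matrix_transpose_mul transpose_Tm matrix_mul_assoc)
  have Tm: "(Tm has_derivative Tm) (at t)"
    by (rule bounded_linear.has_derivative[OF bounded_linear_Tm has_derivative_ident])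
  note mult = bounded_bilinear.FDERIV[OF bounded_bilinear_matrix_matrix_mult]
  have "(\<lambda>s. Tm s ** (transpose X ** X) ** Tm s) differentiable (at t)"
    using mult[OF mult[OF Tm has_derivative_const] Tm] by (rule differentiableI)
  moreover have "(\<lambda>s. Tm s ** Tm s) differentiable (at t)"
    using mult[OF Tm Tm] by (rule differentiableI)
  ultimately show ?thesis
    unfolding Lt_eq by (intro differentiable_add differentiable_scaleR differentiable_diff
        differentiable_const)
qed

lemma Lt_mult_betat:
  fixes X :: "real^'p^'n"
  assumes "invertible (Lt X \<delta> s)"
  shows "Lt X \<delta> s *v betat X y \<delta> s = (1 / real CARD('n)) *\<^sub>R (transpose (Xt X s) *v y)"
  by (simp add: betat_def pinv_eq_matrix_inv[OF assms] matrix_vector_mul_assoc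
      matrix_inv_right[OF assms] del: transpose_matrix_vector)

subsection \<open>The derivative of \<beta>~\<close>

definition system_residual_deriv :: "real^'p^'n \<Rightarrow> real^'n \<Rightarrow> real \<Rightarrow> real^'p \<Rightarrow> real^'p \<Rightarrow> real^'p" where
  "system_residual_deriv X y \<delta> t h = (1 / real CARD('n)) *\<^sub>R
     (had h (transpose X *v y) - had h ((transpose X ** X) *v had t (betat X y \<delta> t))
      - had t ((transpose X ** X) *v had h (betat X y \<delta> t))
      + (2 * \<delta>) *\<^sub>R had t (had h (betat X y \<delta> t)))"

lemma system_residual_has_derivative:
  fixes X :: "real^'p^'n"
  shows "((\<lambda>s. (1 / real CARD('n)) *\<^sub>R (transpose (Xt X s) *v y) - Lt X \<delta> s *v betat X y \<delta> t)
     has_derivative system_residual_deriv X y \<delta> t) (at t)"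
proof -
  let ?\<beta> = "betat X y \<delta> t"
  have lin: "((\<lambda>s. had s v) has_derivative (\<lambda>h. had h v)) (at t)" for v
    by (rule bounded_linear.has_derivative[OF
          bounded_bilinear.bounded_linear_left[OF bounded_bilinear_had] has_derivative_ident])
  have quad: "((\<lambda>s. had s (A *v had s v)) has_derivative
      (\<lambda>h. had h (A *v had t v) + had t (A *v had h v))) (at t)" for A :: "real^'p^'p" and v
    using bounded_bilinear.FDERIV[OF bounded_bilinear_had has_derivative_ident
        bounded_linear.has_derivative[OF matrix_vector_mul_bounded_linear lin]]
    by (simp add: add.commute)
  \<comment> \<open>Writing had s (had s \<beta>) as had s (mat 1 *v had s \<beta>) lets quad cover it.\<close>
  have residual_eq: "(\<lambda>s. (1 / real CARD('n)) *\<^sub>R (transpose (Xt X s) *v y) - Lt X \<delta> s *v ?\<beta>) =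
    (\<lambda>s. (1 / real CARD('n)) *\<^sub>R (had s (transpose X *v y)
      - had s ((transpose X ** X) *v had s ?\<beta>) - \<delta> *\<^sub>R (?\<beta> - had s (mat 1 *v had s ?\<beta>))))"
    by (simp add: fun_eq_iff Lt_mult_vec transpose_Xt_mult_vec algebra_simps
        del: transpose_matrix_vector)
  have had_swap: "had h (had t ?\<beta>) = had t (had h ?\<beta>)" for h
    by (simp add: had_def vec_eq_iff mult_ac)
  \<comment> \<open>algebra_simps turns v + v into the ring product 2 * v of real^'p.\<close>
  have two: "2 * v = 2 *\<^sub>R v" for v :: "real^'p"
    by (simp add: vec_eq_iff)
  show ?thesis
    unfolding residual_eq
    by (intro has_derivative_eq_rhs[OF has_derivative_scaleR_right[OF has_derivative_diff[OF
          has_derivative_diff[OF lin quad] has_derivative_scaleR_right[OF has_derivative_diff[OF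
          has_derivative_const quad]]]]])
      (simp add: fun_eq_iff system_residual_deriv_def had_swap two algebra_simps del: transpose_matrix_vector)
qed

lemma betat_has_derivative:
  fixes X :: "real^'p^'n"
  assumes "\<delta> > 0" and "\<And>j. \<bar>t$j\<bar> < 1"
  shows "(betat X y \<delta> has_derivative
    (\<lambda>h. matrix_inv (Lt X \<delta> t) *v system_residual_deriv X y \<delta> t h)) (at t)"
proof -
  obtain \<kappa> where "\<kappa> > 0" and lower: "\<forall>\<^sub>F s in nhds t. \<forall>v. \<kappa> * norm v \<le> norm (Lt X \<delta> s *v v)"
    using Lt_uniformly_bounded_below_near[OF assms] .
  have "\<forall>\<^sub>F s in nhds t. Lt X \<delta> s *v betat X y \<delta> s = (1 / real CARD('n)) *\<^sub>R (transpose (Xt X s) *v y)"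
    using lower by eventually_elim
      (use Lt_mult_betat invertible_if_norm_lower_bound[OF \<open>\<kappa> > 0\<close>] in blast)
  then show ?thesis
    by (rule has_derivative_solution_of_linear_system[where \<beta> = "betat X y \<delta>",
          OF Lt_differentiable system_residual_has_derivative \<open>\<kappa> > 0\<close> lower])
qed

subsection \<open>The gradient of f\<close>

lemma avec_scaled:
  "real CARD('n) *\<^sub>R avec X y \<delta> t = (transpose X ** X) *v had t (betat X y \<delta> t) - transpose X *v y"
  for X :: "real^'p^'n"
  by (simp add: avec_def scaleR_matrix_vector_assoc[symmetric] scaleR_diff_right
      del: transpose_matrix_vector)

lemma inner_residual_mult_vec:
  "(y - X *v had t (betat X y \<delta> t)) \<bullet> (X *v z) = - (real CARD('n) * (avec X y \<delta> t \<bullet> z))"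
  for X :: "real^'p^'n"
proof -
  have "transpose X *v (y - X *v had t (betat X y \<delta> t)) = - (real CARD('n) *\<^sub>R avec X y \<delta> t)"
    by (simp add: avec_scaled matrix_vector_mult_diff_distrib matrix_vector_mul_assoc
        del: transpose_matrix_vector)
  then show ?thesis
    by (metis dot_lmul_matrix inner_minus_left inner_scaleR_left transpose_matrix_vector)
qed

lemma system_residual_deriv_eq_avec:
  fixes X :: "real^'p^'n" and y :: "real^'n" and \<delta> :: real and t :: "real^'p"
  defines "\<beta> \<equiv> betat X y \<delta> t" and "G \<equiv> transpose X ** X"
  shows "system_residual_deriv X y \<delta> t h = (1 / real CARD('n)) *\<^sub>R
    ((2 * \<delta>) *\<^sub>R had t (had h \<beta>) - had t (G *v had h \<beta>)) - had h (avec X y \<delta> t)"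
proof -
  have "had h (transpose X *v y) - had h (G *v had t \<beta>) = had h (transpose X *v y - G *v had t \<beta>)"
    by (simp add: had_def vec_eq_iff algebra_simps)
  also have "\<dots> = had h (- (real CARD('n) *\<^sub>R avec X y \<delta> t))"
    by (simp add: avec_scaled G_def \<beta>_def del: transpose_matrix_vector)
  also have "\<dots> = - real CARD('n) *\<^sub>R had h (avec X y \<delta> t)"
    by (simp add: had_def vec_eq_iff)
  finally have Xy_eq: "had h (transpose X *v y) - had h (G *v had t \<beta>)
      = - real CARD('n) *\<^sub>R had h (avec X y \<delta> t)" .
  have "system_residual_deriv X y \<delta> t h = (1 / real CARD('n)) *\<^sub>R
      ((had h (transpose X *v y) - had h (G *v had t \<beta>))
        - had t (G *v had h \<beta>) + (2 * \<delta>) *\<^sub>R had t (had h \<beta>))"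
    unfolding system_residual_deriv_def \<beta>_def G_def by simp
  then show ?thesis
    unfolding Xy_eq by (simp add: algebra_simps)
qed

lemma inner_system_residual_deriv:
  fixes X :: "real^'p^'n" and y :: "real^'n" and \<delta> :: real and t :: "real^'p"
  defines "\<beta> \<equiv> betat X y \<delta> t" and "G \<equiv> transpose X ** X"
  shows "u \<bullet> system_residual_deriv X y \<delta> t h =
    ((1 / real CARD('n)) *\<^sub>R ((2 * \<delta>) *\<^sub>R had \<beta> (had t u) - had \<beta> (G *v had t u))
      - had (avec X y \<delta> t) u) \<bullet> h"
proof -
  have "u \<bullet> had t (G *v had h \<beta>) = (X *v had t u) \<bullet> (X *v had \<beta> h)"
    by (simp add: inner_had_right inner_Gram_mult_vec had_commute[of h] G_def
        del: transpose_matrix_vector)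
  also have "\<dots> = (G *v had t u) \<bullet> had \<beta> h"
    using inner_Gram_mult_vec[where u = "had \<beta> h" and X = X and v = "had t u"]
    by (simp add: G_def inner_commute del: transpose_matrix_vector)
  also have "\<dots> = had \<beta> (G *v had t u) \<bullet> h"
    by (rule inner_had_right)
  finally have "u \<bullet> had t (G *v had h \<beta>) = had \<beta> (G *v had t u) \<bullet> h" .
  moreover have "u \<bullet> had t (had h \<beta>) = had \<beta> (had t u) \<bullet> h"
    by (simp add: inner_had_right had_commute[of h])
  moreover have "u \<bullet> had h (avec X y \<delta> t) = had (avec X y \<delta> t) u \<bullet> h"
    by (simp add: inner_had_right had_commute[of h])
  ultimately show ?thesis
    by (simp add: system_residual_deriv_eq_avec G_def \<beta>_def inner_diff_right inner_diff_left)
qed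

lemma zeta_eq:
  fixes X :: "real^'p^'n" and y :: "real^'n" and \<delta> :: real and t :: "real^'p"
  defines "\<beta> \<equiv> betat X y \<delta> t" and "G \<equiv> transpose X ** X"
    and "a \<equiv> avec X y \<delta> t" and "c \<equiv> cvec X y \<delta> t"
  shows "zeta X y \<delta> t = 2 *\<^sub>R (had \<beta> a +
    ((1 / real CARD('n)) *\<^sub>R ((2 * \<delta>) *\<^sub>R had \<beta> (had t c) - had \<beta> (G *v had t c)) - had a c))"
proof -
  have d_eq: "dvec X y \<delta> t = (1 / real CARD('n)) *\<^sub>R (G *v had t c) - (\<delta> / real CARD('n)) *\<^sub>R had t c"
    by (simp add: dvec_def G_def c_def matrix_vector_mult_diff_rdistrib
        scaleR_matrix_vector_assoc[symmetric] del: transpose_matrix_vector)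
  show ?thesis
    unfolding zeta_def bvec_def a_def[symmetric] \<beta>_def[symmetric] c_def[symmetric] d_eq
    by (simp add: had_def vec_eq_iff field_simps)
qed

lemma inner_avec_derivative_eq_zeta:
  fixes X :: "real^'p^'n"
  assumes "invertible (Lt X \<delta> t)"
  shows "2 * (avec X y \<delta> t \<bullet> (had h (betat X y \<delta> t)
      + had t (matrix_inv (Lt X \<delta> t) *v system_residual_deriv X y \<delta> t h))) = zeta X y \<delta> t \<bullet> h"
proof -
  let ?a = "avec X y \<delta> t" and ?c = "cvec X y \<delta> t"
  let ?q = "system_residual_deriv X y \<delta> t h"
  have "?a \<bullet> had h (betat X y \<delta> t) = had (betat X y \<delta> t) ?a \<bullet> h"
    by (metis had_commute inner_had_right)
  moreover have "?a \<bullet> had t (matrix_inv (Lt X \<delta> t) *v ?q) = ?c \<bullet> ?q"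
    by (simp add: inner_had_right cvec_def
        inner_matrix_inv_self_adjoint[OF assms inner_Lt_mult_vec_commute])
  ultimately have "2 * (?a \<bullet> (had h (betat X y \<delta> t) + had t (matrix_inv (Lt X \<delta> t) *v ?q)))
      = 2 * (had (betat X y \<delta> t) ?a \<bullet> h + ?c \<bullet> ?q)"
    by (simp only: inner_add_right)
  also have "\<dots> = zeta X y \<delta> t \<bullet> h"
    by (simp add: inner_system_residual_deriv zeta_eq inner_add_left inner_diff_left algebra_simps)
  finally show ?thesis .
qed

lemma squared_residual_has_derivative:
  fixes X :: "real^'p^'n"
  assumes "\<delta> > 0" and "\<And>j. \<bar>t$j\<bar> < 1"
  shows "((\<lambda>s. (norm (y - X *v had s (betat X y \<delta> s)))\<^sup>2) has_derivative
    (\<lambda>h. real CARD('n) * (zeta X y \<delta> t \<bullet> h))) (at t)"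
proof -
  let ?\<beta> = "betat X y \<delta> t"
  let ?\<beta>' = "\<lambda>h. matrix_inv (Lt X \<delta> t) *v system_residual_deriv X y \<delta> t h"
  have "((\<lambda>s. had s (betat X y \<delta> s)) has_derivative (\<lambda>h. had h ?\<beta> + had t (?\<beta>' h))) (at t)"
    using bounded_bilinear.FDERIV[OF bounded_bilinear_had has_derivative_ident
        betat_has_derivative[OF assms]] by (simp add: add.commute)
  then have "((\<lambda>s. (norm (y - X *v had s (betat X y \<delta> s)))\<^sup>2) has_derivative
      (\<lambda>h. 2 *\<^sub>R ((y - X *v had t ?\<beta>) \<bullet> (0 - X *v (had h ?\<beta> + had t (?\<beta>' h)))))) (at t)"
    using has_derivative_compose[OF has_derivative_diff[OF has_derivative_const
        bounded_linear.has_derivative[OF matrix_vector_mul_bounded_linear]] has_derivative_sqnorm_at]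
    by blast
  moreover have "(\<lambda>h. 2 *\<^sub>R ((y - X *v had t ?\<beta>) \<bullet> (0 - X *v (had h ?\<beta> + had t (?\<beta>' h)))))
      = (\<lambda>h. real CARD('n) * (zeta X y \<delta> t \<bullet> h))"
    by (rule ext) (simp add: inner_residual_mult_vec
        flip: inner_avec_derivative_eq_zeta[OF Lt_invertible[OF assms]] del: transpose_matrix_vector)
  ultimately show ?thesis
    by (rule has_derivative_eq_rhs)
qed

lemma flam_has_derivative:
  fixes X :: "real^'p^'n"
  assumes "\<delta> > 0" and "\<And>j. \<bar>t$j\<bar> < 1"
  shows "(flam X y \<delta> lam has_derivative (\<lambda>h. (zeta X y \<delta> t + lam *\<^sub>R (\<chi> j. 1)) \<bullet> h)) (at t)"
proof -
  have flam_eq: "flam X y \<delta> lam = (\<lambda>s. (1 / real CARD('n)) * (norm (y - X *v had s (betat X y \<delta> s)))\<^sup>2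
      + lam * (\<Sum>j\<in>UNIV. s$j))"
    by (simp add: fun_eq_iff flam_def Xt_mult_vec)
  have sum: "((\<lambda>s. \<Sum>j\<in>UNIV. s$j) has_derivative (\<lambda>h. \<Sum>j\<in>UNIV. h$j)) (at t)"
    by (intro has_derivative_sum bounded_linear.has_derivative[OF bounded_linear_vec_nth
          has_derivative_ident])
  have gradient: "(1 / real CARD('n)) * (real CARD('n) * (zeta X y \<delta> t \<bullet> h)) + lam * (\<Sum>j\<in>UNIV. h$j)
      = (zeta X y \<delta> t + lam *\<^sub>R (\<chi> j. 1)) \<bullet> h" for h
    by (simp add: inner_vec_def sum_distrib_left distrib_right sum.distrib)
  show ?thesis
    unfolding flam_eq
    by (rule has_derivative_eq_rhs[OF has_derivative_add[OF has_derivative_mult_right[OF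
          squared_residual_has_derivative[OF assms]] has_derivative_mult_right[OF sum]]])
      (rule ext, rule gradient)
qed

lemma tw_has_derivative:
  fixes w :: "real^'p"
  shows "(tw has_derivative (\<lambda>h. had (\<chi> j. 2 * w$j * exp (- (w$j * w$j))) h)) (at w)"
proof (subst has_derivative_componentwise_within, intro ballI)
  fix i :: "real^'p" assume "i \<in> Basis"
  then obtain j where i: "i = axis j 1" by (auto simp: Basis_vec_def)
  have "((\<lambda>x. 1 - exp (- (x$j)\<^sup>2)) has_derivative (\<lambda>h. 2 * w$j * exp (- (w$j * w$j)) * h$j)) (at w)"
    by (auto intro!: derivative_eq_intros
        bounded_linear.has_derivative[OF bounded_linear_vec_nth has_derivative_ident]
        simp: fun_eq_iff power2_eq_square)
  then show "((\<lambda>x. tw x \<bullet> i) has_derivative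
      (\<lambda>h. had (\<chi> j. 2 * w$j * exp (- (w$j * w$j))) h \<bullet> i)) (at w)"
    by (simp add: i inner_axis tw_def had_def)
qed

theorem theorem4:
  fixes X :: "real^'p^'n" and y :: "real^'n" and \<delta> lam :: real
  assumes "\<delta> > 0" and "lam > 0"
  shows "(\<forall>t::real^'p. (\<forall>j. 0 < t$j \<and> t$j < 1) \<longrightarrow>
            (flam X y \<delta> lam has_derivative
              (\<lambda>h. (zeta X y \<delta> t + lam *\<^sub>R (\<chi> j. 1)) \<bullet> h)) (at t))
       \<and> (\<forall>w::real^'p.
            (glam X y \<delta> lam has_derivative
              (\<lambda>h. had (zeta X y \<delta> (tw w) + lam *\<^sub>R (\<chi> j. 1))
                       (\<chi> j. 2 * w$j * exp (- (w$j * w$j))) \<bullet> h)) (at w))"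
proof (intro conjI allI impI)
  fix t :: "real^'p"
  assume "\<forall>j. 0 < t$j \<and> t$j < 1"
  then have "\<bar>t$j\<bar> < 1" for j by (metis abs_of_pos)
  then show "(flam X y \<delta> lam has_derivative (\<lambda>h. (zeta X y \<delta> t + lam *\<^sub>R (\<chi> j. 1)) \<bullet> h)) (at t)"
    by (rule flam_has_derivative[OF assms(1)])
next
  fix w :: "real^'p"
  have "\<bar>tw w $ j\<bar> < 1" for j
    using exp_gt_zero[of "- (w$j)\<^sup>2"] by (simp add: tw_def)
  from has_derivative_compose[OF tw_has_derivative flam_has_derivative[OF assms(1) this]]
  have "((\<lambda>w. flam X y \<delta> lam (tw w)) has_derivative (\<lambda>h.
      had (\<chi> j. 2 * w$j * exp (- (w$j * w$j))) (zeta X y \<delta> (tw w) + lam *\<^sub>R (\<chi> j. 1)) \<bullet> h)) (at w)"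
    by (simp only: inner_had_right)
  then show "(glam X y \<delta> lam has_derivative (\<lambda>h. had (zeta X y \<delta> (tw w) + lam *\<^sub>R (\<chi> j. 1))
      (\<chi> j. 2 * w$j * exp (- (w$j * w$j))) \<bullet> h)) (at w)"
    by (simp add: glam_def[abs_def] had_commute)
qed

end
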